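(* Let $X,Y$ be Banach spaces, let $-A$ be the generator of a strongly continuous semigroup $(T(t))_{t\ge0}$ on $X$, and let $C:\mathcal D(A)\to Y$ be linear and bounded for the graph norm. Suppose that $(A,C)$ is an admissible and exactly observable BFC-system. Then the adjoint $T(t_0)^*$ is injective for some $t_0>0$ if and only if $T(t)^*$ is injective for all $t>0$, and this holds if and only if $(T(t))_{t\ge0}$ extends to a group on $X$ (i.e. there is a group $(S(t))_{t\in\mathbb R}$ of bounded operators on $X$ with $S(t)=T(t)$ for $t\ge0$).
   Context: For $\tau\in(0,\infty]$ set $M(\tau)^2:=\sup_{x\in\mathcal D(A),\|x\|=1}\int_0^\tau\|CT(t)x\|_Y^2\,dt$ and $m(\tau)^2:=\inf_{x\in\mathcal D(A),\|x\|=1}\int_0^\tau\|CT(t)x\|_Y^2\,dt$. $C$ is admissible in time $\tau$ if $M(\tau)<\infty$, and exactly observable in time $\eta$ if $m(\eta)>0$. $(A,C)$ is a BFC-system if there exist $0<\eta<\tau$ such that $C$ is admissible and exactly observable in time $\tau$ and $M(\eta)<m(\tau)$. *)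

theory Defs
  imports "HOL-Analysis.Analysis"
begin

text \<open>Strongly continuous (C0) semigroup of bounded operators; values for t < 0 are irrelevant.\<close>
definition c0_semigroup :: "(real \<Rightarrow> ('x::banach \<Rightarrow>\<^sub>L 'x)) \<Rightarrow> bool" where
  "c0_semigroup T \<longleftrightarrow>
     T 0 = id_blinfun \<and>
     (\<forall>s t. 0 \<le> s \<longrightarrow> 0 \<le> t \<longrightarrow> T (s + t) = T s o\<^sub>L T t) \<and>
     (\<forall>x. ((\<lambda>t. T t x) \<longlongrightarrow> x) (at_right 0))"

definition is_generator :: "(real \<Rightarrow> ('x::banach \<Rightarrow>\<^sub>L 'x)) \<Rightarrow> 'x set \<Rightarrow> ('x \<Rightarrow> 'x) \<Rightarrow> bool" where
  "is_generator T D G \<longleftrightarrow>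
     D = {x. \<exists>y. ((\<lambda>h. (1 / h) *\<^sub>R (T h x - x)) \<longlongrightarrow> y) (at_right 0)} \<and>
     (\<forall>x\<in>D. ((\<lambda>h. (1 / h) *\<^sub>R (T h x - x)) \<longlongrightarrow> G x) (at_right 0))"

definition obs_energy :: "(real \<Rightarrow> ('x::banach \<Rightarrow>\<^sub>L 'x)) \<Rightarrow> ('x \<Rightarrow> 'y::banach) \<Rightarrow> ereal \<Rightarrow> 'x \<Rightarrow> ennreal" where
  "obs_energy T C \<tau> x =
     (\<integral>\<^sup>+ t \<in> {t. 0 \<le> t \<and> ereal t < \<tau>}. ennreal ((norm (C (T t x)))\<^sup>2) \<partial>lborel)"

definition M_sq :: "(real \<Rightarrow> ('x::banach \<Rightarrow>\<^sub>L 'x)) \<Rightarrow> ('x \<Rightarrow> 'y::banach) \<Rightarrow> 'x set \<Rightarrow> ereal \<Rightarrow> ennreal" where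
  "M_sq T C D \<tau> = (SUP x \<in> {x \<in> D. norm x = 1}. obs_energy T C \<tau> x)"

definition m_sq :: "(real \<Rightarrow> ('x::banach \<Rightarrow>\<^sub>L 'x)) \<Rightarrow> ('x \<Rightarrow> 'y::banach) \<Rightarrow> 'x set \<Rightarrow> ereal \<Rightarrow> ennreal" where
  "m_sq T C D \<tau> = (INF x \<in> {x \<in> D. norm x = 1}. obs_energy T C \<tau> x)"

definition admissible_in :: "(real \<Rightarrow> ('x::banach \<Rightarrow>\<^sub>L 'x)) \<Rightarrow> ('x \<Rightarrow> 'y::banach) \<Rightarrow> 'x set \<Rightarrow> ereal \<Rightarrow> bool" where
  "admissible_in T C D \<tau> \<longleftrightarrow> M_sq T C D \<tau> < top"

definition exactly_observable_in :: "(real \<Rightarrow> ('x::banach \<Rightarrow>\<^sub>L 'x)) \<Rightarrow> ('x \<Rightarrow> 'y::banach) \<Rightarrow> 'x set \<Rightarrow> ereal \<Rightarrow> bool" where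
  "exactly_observable_in T C D \<tau> \<longleftrightarrow> m_sq T C D \<tau> > 0"

text \<open>BFC-system: exist 0 < eta < tau (tau in (0,infinity]) with C admissible and exactly
  observable in time tau and M(eta) < m(tau) (equivalently M(eta)^2 < m(tau)^2).\<close>
definition BFC_system :: "(real \<Rightarrow> ('x::banach \<Rightarrow>\<^sub>L 'x)) \<Rightarrow> ('x \<Rightarrow> 'y::banach) \<Rightarrow> 'x set \<Rightarrow> bool" where
  "BFC_system T C D \<longleftrightarrow>
     (\<exists>(\<eta>::real) (\<tau>::ereal). 0 < \<eta> \<and> ereal \<eta> < \<tau> \<and>
        admissible_in T C D \<tau> \<and> exactly_observable_in T C D \<tau> \<and>
        M_sq T C D (ereal \<eta>) < m_sq T C D \<tau>)"

definition adjoint_injective :: "('x::banach \<Rightarrow>\<^sub>L 'x) \<Rightarrow> bool" where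
  "adjoint_injective L \<longleftrightarrow> (\<forall>\<phi> :: 'x \<Rightarrow>\<^sub>L real. \<phi> o\<^sub>L L = 0 \<longrightarrow> \<phi> = 0)"

definition extends_to_group :: "(real \<Rightarrow> ('x::banach \<Rightarrow>\<^sub>L 'x)) \<Rightarrow> bool" where
  "extends_to_group T \<longleftrightarrow>
     (\<exists>S :: real \<Rightarrow> ('x \<Rightarrow>\<^sub>L 'x). S 0 = id_blinfun \<and>
        (\<forall>s t. S (s + t) = S s o\<^sub>L S t) \<and> (\<forall>t\<ge>0. S t = T t))"

end

theory Submission
  imports Defs
begin

text \<open>Splitting the observation energy of \<open>x \<in> D\<close> over \<open>[0, \<tau>)\<close> at time \<open>\<eta>\<close> gives
  \<open>m(\<tau>)\<^sup>2 \<parallel>x\<parallel>\<^sup>2 \<le> M(\<eta>)\<^sup>2 \<parallel>x\<parallel>\<^sup>2 + M(\<tau>)\<^sup>2 \<parallel>T(\<eta>) x\<parallel>\<^sup>2\<close>, so the BFC gap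
  \<open>M(\<eta>) < m(\<tau>)\<close> and admissibility make \<open>T(\<eta>)\<close> bounded below on the dense domain \<open>D\<close>, hence
  on \<open>X\<close>. If \<open>T(t\<^sub>0)\<^sup>*\<close> is injective, the range of \<open>T(t\<^sub>0)\<close> is dense by Hahn--Banach; it lies in
  the range of \<open>T(s)\<close>, \<open>s = min t\<^sub>0 \<eta>\<close>, which is closed because \<open>T(s)\<close> is bounded below. So
  \<open>T(s)\<close> is bijective, hence so is every \<open>T(t)\<close>, and \<open>T(-t) := T(t)\<^sup>-\<^sup>1\<close> extends the semigroup
  to a group. Conversely, the operators of a group are surjective, so their adjoints are
  injective.\<close>

section \<open>Uniform boundedness\<close>

lemma norm_blinfun_le_if_ball_bounded:
  fixes L :: "'a::real_normed_vector \<Rightarrow>\<^sub>L 'b::real_normed_vector"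
  assumes "r > 0" and bound: "\<And>u. norm u < r \<Longrightarrow> norm (L u) \<le> B"
  shows "norm L \<le> 2 * B / r"
proof (rule norm_blinfun_bound)
  show "0 \<le> 2 * B / r" using bound[of 0] \<open>r > 0\<close> by simp
  show "norm (L u) \<le> 2 * B / r * norm u" for u
  proof (cases "u = 0")
    case False
    define c where "c = r / (2 * norm u)"
    have "c > 0" "norm (c *\<^sub>R u) < r" using \<open>r > 0\<close> False by (simp_all add: c_def)
    then have "c * norm (L u) \<le> B" using bound[of "c *\<^sub>R u"] by (simp add: blinfun.scaleR_right)
    then show ?thesis using \<open>c > 0\<close> \<open>r > 0\<close> False by (simp add: c_def field_simps)
  qed simp
qed

lemma uniform_boundedness:
  fixes F :: "'i \<Rightarrow> ('a::banach \<Rightarrow>\<^sub>L 'b::real_normed_vector)"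
  assumes bounded: "\<And>x. \<exists>B. \<forall>i. norm (F i x) \<le> B"
  shows "\<exists>B. \<forall>i. norm (F i) \<le> B"
proof -
  define E where "E k = (\<Inter>i. {x. norm (F i x) \<le> real k})" for k :: nat
  have closed_E: "closed (E k)" for k
    unfolding E_def
    by (intro closed_INT ballI closed_Collect_le continuous_intros linear_continuous_on
              bounded_linear.linear blinfun.bounded_linear_right)
  have "x \<in> \<Union>(range E)" for x
  proof -
    obtain B where B: "\<forall>i. norm (F i x) \<le> B" using bounded by blast
    obtain k :: nat where "B \<le> real k" using real_arch_simple by blast
    then have "x \<in> E k" using B unfolding E_def by (auto intro: order_trans)
    then show ?thesis by blast
  qed
  then have "\<Union>(range E) = UNIV" by blast
  have "\<exists>k. interior (E k) \<noteq> {}"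
  proof (rule ccontr)
    assume "\<not> ?thesis"
    then have "euclidean interior_of \<Union>(range E) = {}"
      by (intro Baire_category_alt) (auto simp: completely_metrizable_space_euclidean closed_E
           simp flip: closed_closedin)
    then show False using \<open>\<Union>(range E) = UNIV\<close> by simp
  qed
  then obtain k x0 r where "r > 0" "ball x0 r \<subseteq> interior (E k)"
    using open_contains_ball[of "interior _"] by blast
  then have "r > 0" "ball x0 r \<subseteq> E k" using interior_subset by blast+
  then have small: "norm (F i u) \<le> 2 * real k" if "norm u < r" for i u
  proof -
    have "x0 + u \<in> E k" "x0 \<in> E k" using \<open>r > 0\<close> \<open>ball x0 r \<subseteq> E k\<close> that
      by (auto simp: dist_norm)
    then have "norm (F i (x0 + u)) \<le> real k" "norm (F i x0) \<le> real k" unfolding E_def by auto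
    moreover have "F i u = F i (x0 + u) - F i x0" by (simp add: blinfun.add_right)
    ultimately show ?thesis using norm_triangle_ineq4[of "F i (x0 + u)" "F i x0"] by simp
  qed
  have "norm (F i) \<le> 2 * (2 * real k) / r" for i
    by (rule norm_blinfun_le_if_ball_bounded[OF \<open>r > 0\<close> small])
  then show ?thesis by blast
qed

section \<open>Strongly continuous semigroups\<close>

lemma c0_semigroupD:
  assumes "c0_semigroup T"
  shows c0_semigroup_0: "T 0 = id_blinfun"
    and c0_semigroup_add: "\<And>s t. 0 \<le> s \<Longrightarrow> 0 \<le> t \<Longrightarrow> T (s + t) = T s o\<^sub>L T t"
    and c0_semigroup_tendsto: "\<And>x. ((\<lambda>t. T t x) \<longlongrightarrow> x) (at_right 0)"
  using assms unfolding c0_semigroup_def by auto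

lemma c0_semigroup_apply_add:
  "c0_semigroup T \<Longrightarrow> 0 \<le> s \<Longrightarrow> 0 \<le> t \<Longrightarrow> T (s + t) x = T s (T t x)"
  by (simp add: c0_semigroup_add)

lemma c0_semigroup_commute:
  "c0_semigroup T \<Longrightarrow> 0 \<le> s \<Longrightarrow> 0 \<le> t \<Longrightarrow> T s (T t x) = T t (T s x)"
  by (metis add.commute c0_semigroup_apply_add)

lemma c0_semigroup_bounded_near_0:
  fixes T :: "real \<Rightarrow> ('x::banach \<Rightarrow>\<^sub>L 'x)"
  assumes sg: "c0_semigroup T"
  shows "\<exists>\<delta>>0. \<exists>K. \<forall>t. 0 \<le> t \<and> t \<le> \<delta> \<longrightarrow> norm (T t) \<le> K"
proof (rule ccontr)
  assume "\<not> ?thesis"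
  then have "\<forall>n::nat. \<exists>t. 0 \<le> t \<and> t \<le> 1 / (real n + 1) \<and> norm (T t) > real n + 1"
    by (auto simp: not_le)
  then obtain s where s: "\<And>n. 0 \<le> s n" "\<And>n. s n \<le> 1 / (real n + 1)"
    "\<And>n. norm (T (s n)) > real n + 1"
    by metis
  have "s n \<noteq> 0" for n
  proof
    assume "s n = 0"
    then have "norm (T (s n)) \<le> 1" using c0_semigroup_0[OF sg] norm_blinfun_id_le by simp
    then show False using s(3)[of n] by simp
  qed
  with s(1) have "s n > 0" for n by (simp add: order_le_neq_trans)
  moreover have "s \<longlonglongrightarrow> 0"
  proof (rule tendsto_sandwich[of "\<lambda>_. 0" _ _ "\<lambda>n. inverse (real (Suc n))"])
    show "\<forall>\<^sub>F n in sequentially. s n \<le> inverse (real (Suc n))"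
      using s(2) by (simp add: inverse_eq_divide add.commute)
  qed (use s(1) LIMSEQ_inverse_real_of_nat in auto)
  ultimately have "filterlim s (at_right 0) sequentially"
    by (auto simp: filterlim_at always_eventually less_imp_neq[THEN not_sym])
  then have "(\<lambda>n. T (s n) x) \<longlonglongrightarrow> x" for x
    by (rule filterlim_compose[OF c0_semigroup_tendsto[OF sg]])
  then have "\<exists>B. \<forall>n. norm (T (s n) x) \<le> B" for x
    by (metis bounded_iff convergent_imp_bounded rangeI)
  from uniform_boundedness[of "\<lambda>n. T (s n)", OF this]
  obtain B where B: "\<And>n. norm (T (s n)) \<le> B" by blast
  obtain n :: nat where "B \<le> real n" using real_arch_simple by blast
  then show False using B[of n] s(3)[of n] by simp
qed

lemma c0_semigroup_bounded_on_interval: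
  fixes T :: "real \<Rightarrow> ('x::banach \<Rightarrow>\<^sub>L 'x)"
  assumes sg: "c0_semigroup T"
  shows "\<exists>K\<ge>0. \<forall>t. 0 \<le> t \<and> t \<le> b \<longrightarrow> norm (T t) \<le> K"
proof -
  obtain \<delta> K0 where "\<delta> > 0" and K0: "\<And>t. 0 \<le> t \<Longrightarrow> t \<le> \<delta> \<Longrightarrow> norm (T t) \<le> K0"
    using c0_semigroup_bounded_near_0[OF sg] by blast
  define K where "K = max K0 0"
  have K: "K \<ge> 0" "\<And>t. 0 \<le> t \<Longrightarrow> t \<le> \<delta> \<Longrightarrow> norm (T t) \<le> K"
    using K0 unfolding K_def by (auto intro: max.coboundedI1)
  have "\<exists>B\<ge>0. \<forall>t. 0 \<le> t \<and> t \<le> real n * \<delta> \<longrightarrow> norm (T t) \<le> B" for n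
  proof (induction n)
    case 0
    show ?case using c0_semigroup_0[OF sg] norm_blinfun_id_le by (intro exI[of _ 1]) auto
  next
    case (Suc n)
    then obtain B where B: "B \<ge> 0" "\<And>t. 0 \<le> t \<Longrightarrow> t \<le> real n * \<delta> \<Longrightarrow> norm (T t) \<le> B"
      by blast
    have "norm (T t) \<le> max K (K * B)" if t: "0 \<le> t" "t \<le> real (Suc n) * \<delta>" for t
    proof (cases "t \<le> \<delta>")
      case True then show ?thesis using K t by (auto intro: max.coboundedI1)
    next
      case False
      have "T t = T \<delta> o\<^sub>L T (t - \<delta>)" using c0_semigroup_add[OF sg, of \<delta> "t - \<delta>"] False \<open>\<delta> > 0\<close> by simp
      then have "norm (T t) \<le> norm (T \<delta>) * norm (T (t - \<delta>))" by (simp add: norm_blinfun_compose)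
      also have "\<dots> \<le> K * B"
        using K B t False \<open>\<delta> > 0\<close> by (intro mult_mono) (auto simp: algebra_simps)
      finally show ?thesis by (auto intro: max.coboundedI2)
    qed
    then show ?case using K(1) by (intro exI[of _ "max K (K * B)"]) auto
  qed
  moreover obtain n :: nat where "b / \<delta> \<le> real n" using real_arch_simple by blast
  then have "b \<le> real n * \<delta>" using \<open>\<delta> > 0\<close> by (simp add: field_simps)
  ultimately show ?thesis by (meson order_trans)
qed

lemma c0_semigroup_continuous_on:
  fixes T :: "real \<Rightarrow> ('x::banach \<Rightarrow>\<^sub>L 'x)"
  assumes sg: "c0_semigroup T"
  shows "continuous_on {0..} (\<lambda>t. T t x)"
  unfolding continuous_on_iff
proof (intro ballI allI impI)
  fix t e :: real assume t: "t \<in> {0..}" and e: "e > 0"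
  obtain K where K: "K \<ge> 0" "\<And>s. 0 \<le> s \<Longrightarrow> s \<le> t + 1 \<Longrightarrow> norm (T s) \<le> K"
    using c0_semigroup_bounded_on_interval[OF sg, of "t + 1"] by blast
  have "\<forall>\<^sub>F h in at_right 0. dist (T h x) x < e / (K + 1)"
    using c0_semigroup_tendsto[OF sg, of x] e K(1) by (auto simp: tendsto_iff)
  then obtain d where d: "d > 0" "\<And>h. 0 < h \<Longrightarrow> h < d \<Longrightarrow> dist (T h x) x < e / (K + 1)"
    unfolding eventually_at_right_field by (auto simp: add.commute)
  have close: "dist (T a x) (T b x) < e" if ab: "0 \<le> a" "a \<le> b" "b \<le> t + 1" "b - a < d" for a b
  proof (cases "a = b")
    case False
    have "T b x - T a x = T a (T (b - a) x - x)"
      using c0_semigroup_apply_add[OF sg, of a "b - a"] ab by (simp add: blinfun.diff_right)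
    then have "norm (T b x - T a x) \<le> norm (T a) * norm (T (b - a) x - x)"
      by (simp add: norm_blinfun)
    also have "\<dots> \<le> K * (e / (K + 1))"
      using K ab d(2)[of "b - a"] False by (intro mult_mono) (auto simp: dist_norm)
    also have "\<dots> < e" using K e by (simp add: field_simps)
    finally show ?thesis by (simp add: dist_norm norm_minus_commute)
  qed (use e in simp)
  show "\<exists>d>0. \<forall>t'\<in>{0..}. dist t' t < d \<longrightarrow> dist (T t' x) (T t x) < e"
  proof (intro exI[of _ "min d 1"] conjI ballI impI)
    fix t' :: real assume "t' \<in> {0..}" "dist t' t < min d 1"
    then show "dist (T t' x) (T t x) < e"
      using close[of t t'] close[of t' t] t by (cases "t \<le> t'") (auto simp: dist_real_def dist_commute)
  qed (use d in simp)
qed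

section \<open>Generators\<close>

lemma interval_average_tendsto:
  fixes f :: "real \<Rightarrow> 'a::banach"
  assumes cont: "continuous_on {0..} f" and "0 \<le> h"
  shows "((\<lambda>r. (1 / r) *\<^sub>R integral {h..h + r} f) \<longlongrightarrow> f h) (at_right 0)"
  unfolding tendsto_iff
proof (intro allI impI)
  fix e :: real assume "e > 0"
  obtain d where "d > 0" and d: "\<And>s. s \<in> {0..} \<Longrightarrow> dist s h < d \<Longrightarrow> dist (f s) (f h) < e / 2"
    using cont \<open>0 \<le> h\<close> \<open>e > 0\<close> unfolding continuous_on_iff by (metis atLeast_iff half_gt_zero)
  have "dist ((1 / r) *\<^sub>R integral {h..h + r} f) (f h) < e" if r: "0 < r" "r < d" for r
  proof -
    have "continuous_on {h..h + r} f" using continuous_on_subset[OF cont] \<open>0 \<le> h\<close> by auto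
    then have "integral {h..h + r} f - r *\<^sub>R f h = integral {h..h + r} (\<lambda>s. f s - f h)"
      using r by (simp add: integral_diff integrable_continuous_interval)
    also have "norm \<dots> \<le> (e / 2) * ((h + r) - h)"
    proof (rule integral_bound)
      show "continuous_on {h..h + r} (\<lambda>s. f s - f h)"
        using continuous_on_subset[OF cont] \<open>0 \<le> h\<close> by (auto intro!: continuous_intros)
      show "norm (f t - f h) \<le> e / 2" if "t \<in> {h..h + r}" for t
        using d[of t] that \<open>0 \<le> h\<close> r by (auto simp: dist_norm dist_real_def)
    qed (use r in simp)
    finally have "norm ((1 / r) *\<^sub>R (integral {h..h + r} f - r *\<^sub>R f h)) \<le> e / 2"
      using r by (simp add: divide_simps)
    then show ?thesis using r \<open>e > 0\<close> by (simp add: dist_norm scaleR_diff_right)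
  qed
  then show "\<forall>\<^sub>F r in at_right 0. dist ((1 / r) *\<^sub>R integral {h..h + r} f) (f h) < e"
    unfolding eventually_at_right_field using \<open>d > 0\<close> by blast
qed

lemma is_generatorD:
  assumes "is_generator T D G"
  shows is_generator_domainI:
      "\<And>x y. ((\<lambda>h. (1 / h) *\<^sub>R (T h x - x)) \<longlongrightarrow> y) (at_right 0) \<Longrightarrow> x \<in> D"
    and is_generator_tendsto:
      "\<And>x. x \<in> D \<Longrightarrow> ((\<lambda>h. (1 / h) *\<^sub>R (T h x - x)) \<longlongrightarrow> G x) (at_right 0)"
  using assms unfolding is_generator_def by auto

lemma is_generator_eq:
  assumes "is_generator T D G"
    and "((\<lambda>h. (1 / h) *\<^sub>R (T h x - x)) \<longlongrightarrow> y) (at_right (0::real))"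
  shows "x \<in> D" "G x = y"
proof -
  show "x \<in> D" using is_generator_domainI[OF assms] .
  then show "G x = y"
    using tendsto_unique[OF trivial_limit_at_right_real is_generator_tendsto[OF assms(1)] assms(2)]
    by blast
qed

lemma is_generator_add:
  assumes gen: "is_generator T D G" and "x \<in> D" "y \<in> D"
  shows "x + y \<in> D" "G (x + y) = G x + G y"
proof -
  have "((\<lambda>h. (1 / h) *\<^sub>R (T h (x + y) - (x + y))) \<longlongrightarrow> G x + G y) (at_right 0)"
    using tendsto_add[OF is_generator_tendsto[OF gen \<open>x \<in> D\<close>] is_generator_tendsto[OF gen \<open>y \<in> D\<close>]]
    by (simp add: blinfun.add_right algebra_simps scaleR_add_right)
  then show "x + y \<in> D" "G (x + y) = G x + G y" using is_generator_eq[OF gen] by blast+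
qed

lemma is_generator_scaleR:
  assumes gen: "is_generator T D G" and "x \<in> D"
  shows "c *\<^sub>R x \<in> D" "G (c *\<^sub>R x) = c *\<^sub>R G x"
proof -
  have "((\<lambda>h. (1 / h) *\<^sub>R (T h (c *\<^sub>R x) - c *\<^sub>R x)) \<longlongrightarrow> c *\<^sub>R G x) (at_right 0)"
    using tendsto_scaleR[OF tendsto_const[of c] is_generator_tendsto[OF gen \<open>x \<in> D\<close>]]
    by (simp add: blinfun.scaleR_right scaleR_diff_right)
  then show "c *\<^sub>R x \<in> D" "G (c *\<^sub>R x) = c *\<^sub>R G x" using is_generator_eq[OF gen] by blast+
qed

lemma is_generator_subspace:
  assumes gen: "is_generator T D G"
  shows "subspace D"
proof (rule subspaceI)
  show "0 \<in> D"
    by (rule is_generator_domainI[OF gen, of _ 0]) (simp add: blinfun.zero_right)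
qed (use is_generator_add[OF gen] is_generator_scaleR[OF gen] in blast)+

lemma is_generator_semigroup_invariant:
  assumes sg: "c0_semigroup T" and gen: "is_generator T D G" and "x \<in> D" "0 \<le> t"
  shows "T t x \<in> D" "G (T t x) = T t (G x)"
proof -
  have "((\<lambda>h. T t ((1 / h) *\<^sub>R (T h x - x))) \<longlongrightarrow> T t (G x)) (at_right 0)"
    by (rule blinfun.tendsto[OF tendsto_const is_generator_tendsto[OF gen \<open>x \<in> D\<close>]])
  moreover have "T t ((1 / h) *\<^sub>R (T h x - x)) = (1 / h) *\<^sub>R (T h (T t x) - T t x)" if "h > 0" for h
    using c0_semigroup_commute[OF sg \<open>0 \<le> t\<close>, of h x] that
    by (simp add: blinfun.scaleR_right blinfun.diff_right)
  then have "\<forall>\<^sub>F h in at_right 0. T t ((1 / h) *\<^sub>R (T h x - x)) = (1 / h) *\<^sub>R (T h (T t x) - T t x)"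
    by (auto simp: eventually_at_right_field intro: exI[of _ 1])
  ultimately have "((\<lambda>h. (1 / h) *\<^sub>R (T h (T t x) - T t x)) \<longlongrightarrow> T t (G x)) (at_right 0)"
    by (rule Lim_transform_eventually)
  then show "T t x \<in> D" "G (T t x) = T t (G x)" using is_generator_eq[OF gen] by blast+
qed

lemma is_generator_integral_in_domain:
  fixes T :: "real \<Rightarrow> ('x::banach \<Rightarrow>\<^sub>L 'x)"
  assumes sg: "c0_semigroup T" and gen: "is_generator T D G" and "h > 0"
  shows "integral {0..h} (\<lambda>s. T s x) \<in> D"
proof -
  define f where "f = (\<lambda>s. T s x)"
  have cont: "continuous_on {0..} f" unfolding f_def by (rule c0_semigroup_continuous_on[OF sg])
  have int: "f integrable_on {a..b}" if "0 \<le> a" for a b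
    using continuous_on_subset[OF cont] that by (intro integrable_continuous_interval) auto
  have "(1 / r) *\<^sub>R integral {h..h + r} f - (1 / r) *\<^sub>R integral {0..0 + r} f
      = (1 / r) *\<^sub>R (T r (integral {0..h} f) - integral {0..h} f)"
    if r: "0 < r" "r < h" for r
  proof -
    have "T r (integral {0..h} f) = integral {0..h} (blinfun_apply (T r) \<circ> f)"
      by (rule integral_linear[OF int, symmetric]) (auto intro: blinfun.bounded_linear_right)
    also have "\<dots> = integral {0..h} (f \<circ> (+) r)"
      by (rule integral_cong) (use r in \<open>simp add: f_def c0_semigroup_add[OF sg]\<close>)
    also have "\<dots> = integral {r..h + r} f"
      using integral_shift_Icc_real[of 0 h f r] by simp
    finally have shift: "T r (integral {0..h} f) = integral {r..h + r} f" .
    have c1: "integral {0..r} f + integral {r..h} f = integral {0..h} f"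
      using Henstock_Kurzweil_Integration.integral_combine[of 0 r h f] int[of 0 h] r by simp
    have c2: "integral {r..h} f + integral {h..h + r} f = integral {r..h + r} f"
      using Henstock_Kurzweil_Integration.integral_combine[of r h "h + r" f] int[of r "h + r"] r
      by simp
    have "T r (integral {0..h} f) - integral {0..h} f = integral {h..h + r} f - integral {0..r} f"
      using shift by (simp flip: c1 c2 add: algebra_simps)
    then show ?thesis by (simp add: scaleR_diff_right)
  qed
  then have ev: "\<forall>\<^sub>F r in at_right 0. (1 / r) *\<^sub>R integral {h..h + r} f - (1 / r) *\<^sub>R integral {0..0 + r} f
      = (1 / r) *\<^sub>R (T r (integral {0..h} f) - integral {0..h} f)"
    unfolding eventually_at_right_field using \<open>h > 0\<close> by blast
  have "((\<lambda>r. (1 / r) *\<^sub>R integral {h..h + r} f - (1 / r) *\<^sub>R integral {0..0 + r} f)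
      \<longlongrightarrow> f h - f 0) (at_right 0)"
    using \<open>h > 0\<close> by (intro tendsto_diff interval_average_tendsto cont) auto
  from this ev have "((\<lambda>r. (1 / r) *\<^sub>R (T r (integral {0..h} f) - integral {0..h} f))
      \<longlongrightarrow> f h - f 0) (at_right 0)"
    by (rule Lim_transform_eventually)
  then have "integral {0..h} f \<in> D" by (rule is_generator_domainI[OF gen])
  then show ?thesis by (simp add: f_def)
qed

lemma is_generator_dense_domain:
  fixes T :: "real \<Rightarrow> ('x::banach \<Rightarrow>\<^sub>L 'x)"
  assumes sg: "c0_semigroup T" and gen: "is_generator T D G"
  shows "closure D = UNIV"
proof -
  have "x \<in> closure D" for x
  proof (rule Lim_in_closed_set[OF closed_closure _ trivial_limit_at_right_real])
    show "((\<lambda>h. (1 / h) *\<^sub>R integral {0..0 + h} (\<lambda>s. T s x)) \<longlongrightarrow> x) (at_right 0)"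
      using interval_average_tendsto[OF c0_semigroup_continuous_on[OF sg], of 0 x]
      by (simp add: c0_semigroup_0[OF sg])
    show "\<forall>\<^sub>F h in at_right 0. (1 / h) *\<^sub>R integral {0..0 + h} (\<lambda>s. T s x) \<in> closure D"
      unfolding eventually_at_right_field
      by (auto intro!: exI[of _ 1] closure_subset[THEN subsetD] is_generator_scaleR(1)[OF gen]
          is_generator_integral_in_domain[OF sg gen])
  qed
  then show ?thesis by blast
qed

section \<open>Operators bounded below\<close>

definition bounded_below :: "('a::real_normed_vector \<Rightarrow>\<^sub>L 'b::real_normed_vector) \<Rightarrow> bool" where
  "bounded_below L \<longleftrightarrow> (\<exists>c>0. \<forall>x. c * norm x \<le> norm (L x))"

lemma bounded_below_if_dense:
  fixes L :: "'a::real_normed_vector \<Rightarrow>\<^sub>L 'b::real_normed_vector"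
  assumes "c > 0" and bound: "\<And>x. x \<in> S \<Longrightarrow> c * norm x \<le> norm (L x)"
    and dense: "closure S = UNIV"
  shows "bounded_below L"
proof -
  have "closed {x. c * norm x \<le> norm (L x)}"
    by (intro closed_Collect_le continuous_intros linear_continuous_on bounded_linear.linear
        blinfun.bounded_linear_right)
  then have "closure S \<subseteq> {x. c * norm x \<le> norm (L x)}"
    using bound by (intro closure_minimal) auto
  then show ?thesis using dense \<open>c > 0\<close> unfolding bounded_below_def by auto
qed

lemma bounded_below_compose:
  assumes "bounded_below L" "bounded_below K"
  shows "bounded_below (L o\<^sub>L K)"
proof -
  obtain c d where "c > 0" "d > 0" and c: "\<And>y. c * norm y \<le> norm (L y)"
    and d: "\<And>x. d * norm x \<le> norm (K x)"
    using assms unfolding bounded_below_def by blast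
  have "c * d * norm x \<le> norm ((L o\<^sub>L K) x)" for x
  proof -
    have "c * d * norm x \<le> c * norm (K x)"
      using mult_left_mono[OF d[of x], of c] \<open>c > 0\<close> by (simp add: mult.assoc)
    also have "\<dots> \<le> norm ((L o\<^sub>L K) x)" using c[of "K x"] by simp
    finally show ?thesis .
  qed
  then show ?thesis using \<open>c > 0\<close> \<open>d > 0\<close> unfolding bounded_below_def by (meson mult_pos_pos)
qed

lemma bounded_below_compose_right:
  assumes "bounded_below (L o\<^sub>L K)"
  shows "bounded_below K"
proof -
  obtain c where "c > 0" and c: "\<And>x. c * norm x \<le> norm (L (K x))"
    using assms unfolding bounded_below_def by auto
  have "c / (norm L + 1) * norm x \<le> norm (K x)" for x
  proof -
    have "c * norm x \<le> norm L * norm (K x)"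
      using c[of x] norm_blinfun[of L "K x"] by linarith
    also have "\<dots> \<le> (norm L + 1) * norm (K x)" by (simp add: algebra_simps)
    finally have "c * norm x \<le> (norm L + 1) * norm (K x)" .
    moreover have "norm L + 1 > 0" by (simp add: add_nonneg_pos)
    ultimately show ?thesis by (simp add: pos_divide_le_eq mult.commute)
  qed
  moreover have "c / (norm L + 1) > 0"
    using \<open>c > 0\<close> by (simp add: add_nonneg_pos)
  ultimately show ?thesis unfolding bounded_below_def by blast
qed

lemma bounded_below_inj:
  assumes "bounded_below L"
  shows "inj (blinfun_apply L)"
proof (rule injI)
  fix x y assume "L x = L y"
  obtain c where "c > 0" "c * norm (x - y) \<le> norm (L (x - y))"
    using assms unfolding bounded_below_def by blast
  then show "x = y" using \<open>L x = L y\<close> by (simp add: blinfun.diff_right mult_le_0_iff)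
qed

lemma closed_range_bounded_below:
  fixes L :: "'a::banach \<Rightarrow>\<^sub>L 'b::real_normed_vector"
  assumes "bounded_below L"
  shows "closed (range (blinfun_apply L))"
proof -
  obtain c where "c > 0" "\<forall>x\<in>UNIV. c * norm x \<le> norm (L x)"
    using assms unfolding bounded_below_def by blast
  then have "complete (range (blinfun_apply L))"
    using complete_isometric_image[OF _ subspace_UNIV blinfun.bounded_linear_right] complete_UNIV
    by blast
  then show ?thesis by (rule complete_imp_closed)
qed

lemma bounded_below_surj_inverse:
  fixes L :: "'a::real_normed_vector \<Rightarrow>\<^sub>L 'b::real_normed_vector"
  assumes "bounded_below L" and surj: "surj (blinfun_apply L)"
  shows "\<exists>R :: 'b \<Rightarrow>\<^sub>L 'a. (\<forall>y. L (R y) = y) \<and> (\<forall>x. R (L x) = x)"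
proof -
  obtain c where "c > 0" and c: "\<And>x. c * norm x \<le> norm (L x)"
    using assms unfolding bounded_below_def by blast
  define f where "f = inv (blinfun_apply L)"
  have Lf: "L (f y) = y" for y unfolding f_def by (rule surj_f_inv_f[OF surj])
  have fL: "f (L x) = x" for x unfolding f_def by (rule inv_f_f[OF bounded_below_inj[OF assms(1)]])
  have "bounded_linear f"
  proof (rule bounded_linear_intro)
    show "f (x + y) = f x + f y" for x y
      by (metis Lf fL blinfun.add_right)
    show "f (r *\<^sub>R x) = r *\<^sub>R f x" for r x
      by (metis Lf fL blinfun.scaleR_right)
    show "norm (f x) \<le> norm x * (1 / c)" for x
      using c[of "f x"] \<open>c > 0\<close> by (simp add: Lf field_simps)
  qed
  then show ?thesis using Lf fL by (intro exI[of _ "Blinfun f"]) (simp add: bounded_linear_Blinfun_apply)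
qed

section \<open>The Hahn--Banach theorem\<close>

text \<open>Partial linear functionals dominated by the norm are represented by their graphs, so that
  extensions are ordered by set inclusion and Zorn's lemma applies directly.\<close>

definition dominated_linear_graph :: "('x::real_normed_vector \<times> real) set \<Rightarrow> bool" where
  "dominated_linear_graph F \<longleftrightarrow>
     (\<forall>x a b. (x, a) \<in> F \<longrightarrow> (x, b) \<in> F \<longrightarrow> a = b) \<and>
     (\<forall>x a y b. (x, a) \<in> F \<longrightarrow> (y, b) \<in> F \<longrightarrow> (x + y, a + b) \<in> F) \<and>
     (\<forall>x a c. (x, a) \<in> F \<longrightarrow> (c *\<^sub>R x, c * a) \<in> F) \<and>
     (\<forall>x a. (x, a) \<in> F \<longrightarrow> a \<le> norm x)"

lemma dominated_linear_graphD:
  assumes "dominated_linear_graph F"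
  shows dominated_linear_graph_unique: "\<And>x a b. (x, a) \<in> F \<Longrightarrow> (x, b) \<in> F \<Longrightarrow> a = b"
    and dominated_linear_graph_add: "\<And>x a y b. (x, a) \<in> F \<Longrightarrow> (y, b) \<in> F \<Longrightarrow> (x + y, a + b) \<in> F"
    and dominated_linear_graph_scaleR: "\<And>x a c. (x, a) \<in> F \<Longrightarrow> (c *\<^sub>R x, c * a) \<in> F"
    and dominated_linear_graph_le_norm: "\<And>x a. (x, a) \<in> F \<Longrightarrow> a \<le> norm x"
  using assms unfolding dominated_linear_graph_def by blast+

lemma dominated_linear_graph_diff:
  assumes "dominated_linear_graph F" "(x, a) \<in> F" "(y, b) \<in> F"
  shows "(x - y, a - b) \<in> F"
  using dominated_linear_graph_add[OF assms(1,2) dominated_linear_graph_scaleR[OF assms(1,3), of "-1"]]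
  by simp

lemma dominated_linear_graph_extension_le_norm:
  fixes F :: "('x::real_normed_vector \<times> real) set"
  assumes F: "dominated_linear_graph F" and xa: "(x, a) \<in> F"
    and lower: "\<And>x a. (x, a) \<in> F \<Longrightarrow> a - norm (x - y) \<le> c"
    and upper: "\<And>x a. (x, a) \<in> F \<Longrightarrow> c \<le> norm (x + y) - a"
  shows "a + t * c \<le> norm (x + t *\<^sub>R y)"
proof (cases t "0::real" rule: linorder_cases)
  case equal
  then show ?thesis using dominated_linear_graph_le_norm[OF F xa] by simp
next
  case greater
  have "t * c \<le> t * (norm ((1 / t) *\<^sub>R x + y) - (1 / t) * a)"
    using upper[OF dominated_linear_graph_scaleR[OF F xa, of "1 / t"]] greater by (simp add: mult_left_mono)
  also have "\<dots> = norm (t *\<^sub>R ((1 / t) *\<^sub>R x + y)) - a"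
    using greater by (simp add: right_diff_distrib)
  finally show ?thesis using greater by (simp add: scaleR_add_right)
next
  case less
  define r where "r = - t"
  have "r > 0" using less by (simp add: r_def)
  have "r * ((1 / r) * a - norm ((1 / r) *\<^sub>R x - y)) \<le> r * c"
    using lower[OF dominated_linear_graph_scaleR[OF F xa, of "1 / r"]] \<open>r > 0\<close>
    by (simp add: mult_left_mono)
  moreover have "x + t *\<^sub>R y = r *\<^sub>R ((1 / r) *\<^sub>R x - y)"
    using \<open>r > 0\<close> by (simp add: r_def algebra_simps)
  then have "norm (x + t *\<^sub>R y) = r * norm ((1 / r) *\<^sub>R x - y)" using \<open>r > 0\<close> by simp
  ultimately show ?thesis using \<open>r > 0\<close> by (simp add: r_def algebra_simps)
qed

lemma dominated_linear_graph_extend: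
  fixes F :: "('x::real_normed_vector \<times> real) set"
  assumes F: "dominated_linear_graph F" and "y \<notin> fst ` F"
    and lower: "\<And>x a. (x, a) \<in> F \<Longrightarrow> a - norm (x - y) \<le> c"
    and upper: "\<And>x a. (x, a) \<in> F \<Longrightarrow> c \<le> norm (x + y) - a"
  shows "dominated_linear_graph {(x + t *\<^sub>R y, a + t * c) | x a t. (x, a) \<in> F}"
    (is "dominated_linear_graph ?F")
  unfolding dominated_linear_graph_def
proof (intro conjI allI impI)
  fix w p q assume "(w, p) \<in> ?F" "(w, q) \<in> ?F"
  then obtain x a t x' a' t' where xa: "(x, a) \<in> F" "w = x + t *\<^sub>R y" "p = a + t * c"
    and xa': "(x', a') \<in> F" "w = x' + t' *\<^sub>R y" "q = a' + t' * c"
    by blast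
  have diff: "(x' - x, a' - a) \<in> F" by (rule dominated_linear_graph_diff[OF F xa'(1) xa(1)])
  show "p = q"
  proof (cases "t = t'")
    case True
    then show ?thesis
      using xa xa' dominated_linear_graph_unique[OF F xa(1), of a'] by simp
  next
    case False
    have "(t - t') *\<^sub>R y = x' - x"
      using xa(2) xa'(2) by (simp add: algebra_simps)
    then have "(1 / (t - t')) *\<^sub>R ((t - t') *\<^sub>R y) = (1 / (t - t')) *\<^sub>R (x' - x)" by simp
    then have "y = (1 / (t - t')) *\<^sub>R (x' - x)" using False by simp
    then have "(y, (1 / (t - t')) * (a' - a)) \<in> F"
      using dominated_linear_graph_scaleR[OF F diff, of "1 / (t - t')"] by simp
    then show ?thesis using \<open>y \<notin> fst ` F\<close> by force
  qed
next
  fix w p v q assume "(w, p) \<in> ?F" "(v, q) \<in> ?F"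
  then obtain x a t x' a' t' where "(x, a) \<in> F" "w = x + t *\<^sub>R y" "p = a + t * c"
    and "(x', a') \<in> F" "v = x' + t' *\<^sub>R y" "q = a' + t' * c"
    by blast
  then show "(w + v, p + q) \<in> ?F"
    using dominated_linear_graph_add[OF F]
    by (intro CollectI exI[of _ "x + x'"] exI[of _ "a + a'"] exI[of _ "t + t'"])
       (simp add: algebra_simps)
next
  fix w p r assume "(w, p) \<in> ?F"
  then obtain x a t where "(x, a) \<in> F" "w = x + t *\<^sub>R y" "p = a + t * c" by blast
  then show "(r *\<^sub>R w, r * p) \<in> ?F"
    using dominated_linear_graph_scaleR[OF F]
    by (intro CollectI exI[of _ "r *\<^sub>R x"] exI[of _ "r * a"] exI[of _ "r * t"])
       (simp add: algebra_simps)
next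
  fix w p assume "(w, p) \<in> ?F"
  then obtain x a t where "(x, a) \<in> F" "w = x + t *\<^sub>R y" "p = a + t * c" by blast
  then show "p \<le> norm w" using dominated_linear_graph_extension_le_norm[OF F _ lower upper] by simp
qed

lemma dominated_linear_graph_extend_strict:
  fixes F :: "('x::real_normed_vector \<times> real) set"
  assumes F: "dominated_linear_graph F" and "F \<noteq> {}" and "y \<notin> fst ` F"
  shows "\<exists>F'. dominated_linear_graph F' \<and> F \<subset> F'"
proof -
  define S where "S = {a - norm (x - y) | x a. (x, a) \<in> F}"
  have S_le: "s \<le> norm (z + y) - b" if "s \<in> S" "(z, b) \<in> F" for s z b
  proof -
    obtain x a where xa: "(x, a) \<in> F" "s = a - norm (x - y)" using \<open>s \<in> S\<close> unfolding S_def by blast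
    have "a + b \<le> norm (x + z)"
      by (rule dominated_linear_graph_le_norm[OF F dominated_linear_graph_add[OF F xa(1) that(2)]])
    also have "\<dots> \<le> norm (x - y) + norm (z + y)"
      using norm_triangle_ineq[of "x - y" "z + y"] by simp
    finally show ?thesis using xa(2) by simp
  qed
  obtain z0 b0 where z0: "(z0, b0) \<in> F" using \<open>F \<noteq> {}\<close> by auto
  then have "S \<noteq> {}" unfolding S_def by blast
  have "bdd_above S" using S_le z0 by (intro bdd_aboveI[of _ "norm (z0 + y) - b0"]) auto
  define c where "c = Sup S"
  define F' where "F' = {(x + t *\<^sub>R y, a + t * c) | x a t. (x, a) \<in> F}"
  have "dominated_linear_graph F'"
    unfolding F'_def
  proof (rule dominated_linear_graph_extend[OF F \<open>y \<notin> fst ` F\<close>])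
    show "a - norm (x - y) \<le> c" if "(x, a) \<in> F" for x a
      unfolding c_def using that \<open>bdd_above S\<close> by (intro cSup_upper) (auto simp: S_def)
    show "c \<le> norm (x + y) - a" if "(x, a) \<in> F" for x a
      unfolding c_def using that \<open>S \<noteq> {}\<close> S_le by (intro cSup_least) auto
  qed
  moreover have "F \<subseteq> F'" unfolding F'_def by force
  moreover have "(0, 0) \<in> F"
    using dominated_linear_graph_scaleR[OF F z0, of 0] by simp
  then have "(y, c) \<in> F'" unfolding F'_def by force
  then have "F \<noteq> F'" using \<open>y \<notin> fst ` F\<close> by force
  ultimately show ?thesis by blast
qed

lemma dominated_linear_graph_chain_Union:
  assumes graphs: "\<And>F. F \<in> \<C> \<Longrightarrow> dominated_linear_graph F" and "chain\<^sub>\<subseteq> \<C>"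
  shows "dominated_linear_graph (\<Union>\<C>)"
proof -
  have common: "\<exists>F\<in>\<C>. p \<in> F \<and> q \<in> F" if "p \<in> \<Union>\<C>" "q \<in> \<Union>\<C>" for p q
    using that \<open>chain\<^sub>\<subseteq> \<C>\<close> unfolding chain_subset_def by blast
  show ?thesis
    unfolding dominated_linear_graph_def
  proof (intro conjI allI impI)
    fix x a b assume "(x, a) \<in> \<Union>\<C>" "(x, b) \<in> \<Union>\<C>"
    then obtain F where "F \<in> \<C>" "(x, a) \<in> F" "(x, b) \<in> F" using common by blast
    then show "a = b" using dominated_linear_graph_unique graphs by blast
  next
    fix x a y b assume "(x, a) \<in> \<Union>\<C>" "(y, b) \<in> \<Union>\<C>"
    then obtain F where "F \<in> \<C>" "(x, a) \<in> F" "(y, b) \<in> F" using common by blast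
    then show "(x + y, a + b) \<in> \<Union>\<C>" using dominated_linear_graph_add graphs by blast
  next
    fix x a c assume "(x, a) \<in> \<Union>\<C>"
    then obtain F where "F \<in> \<C>" "(x, a) \<in> F" by blast
    then show "(c *\<^sub>R x, c * a) \<in> \<Union>\<C>" using dominated_linear_graph_scaleR graphs by blast
  next
    fix x a assume "(x, a) \<in> \<Union>\<C>"
    then obtain F where "F \<in> \<C>" "(x, a) \<in> F" by blast
    then show "a \<le> norm x" using dominated_linear_graph_le_norm graphs by blast
  qed
qed

lemma dominated_linear_graph_total_extension:
  fixes F0 :: "('x::real_normed_vector \<times> real) set"
  assumes F0: "dominated_linear_graph F0" and "F0 \<noteq> {}"
  shows "\<exists>F. dominated_linear_graph F \<and> F0 \<subseteq> F \<and> (\<forall>x. \<exists>a. (x, a) \<in> F)"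
proof -
  define \<A> where "\<A> = {F. dominated_linear_graph F \<and> F0 \<subseteq> F}"
  have "\<forall>\<C>\<in>chains \<A>. \<exists>U\<in>\<A>. \<forall>F\<in>\<C>. F \<subseteq> U"
  proof
    fix \<C> assume "\<C> \<in> chains \<A>"
    then have "\<C> \<subseteq> \<A>" and chain: "chain\<^sub>\<subseteq> \<C>" unfolding chains_def by auto
    then have graphs: "\<And>F. F \<in> \<C> \<Longrightarrow> dominated_linear_graph F" unfolding \<A>_def by blast
    show "\<exists>U\<in>\<A>. \<forall>F\<in>\<C>. F \<subseteq> U"
    proof (cases "\<C> = {}")
      case True
      then show ?thesis using F0 unfolding \<A>_def by blast
    next
      case False
      then have "F0 \<subseteq> \<Union>\<C>" using \<open>\<C> \<subseteq> \<A>\<close> unfolding \<A>_def by blast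
      then have "\<Union>\<C> \<in> \<A>"
        unfolding \<A>_def using dominated_linear_graph_chain_Union[OF graphs chain] by blast
      then show ?thesis by blast
    qed
  qed
  from Zorn_Lemma2[OF this] obtain F where "F \<in> \<A>" and maximal: "\<forall>F'\<in>\<A>. F \<subseteq> F' \<longrightarrow> F' = F"
    by blast
  then have F: "dominated_linear_graph F" and "F0 \<subseteq> F" unfolding \<A>_def by auto
  have total: "\<exists>a. (x, a) \<in> F" for x
  proof (rule ccontr)
    assume "\<nexists>a. (x, a) \<in> F"
    then have "x \<notin> fst ` F" by force
    then obtain F' where "dominated_linear_graph F'" "F \<subset> F'"
      using dominated_linear_graph_extend_strict[OF F] \<open>F0 \<noteq> {}\<close> \<open>F0 \<subseteq> F\<close> by blast
    moreover from this have "F' \<in> \<A>" unfolding \<A>_def using \<open>F0 \<subseteq> F\<close> by blast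
    ultimately show False using maximal by blast
  qed
  then show ?thesis using F \<open>F0 \<subseteq> F\<close> by blast
qed

lemma hahn_banach_graph:
  fixes F0 :: "('x::real_normed_vector \<times> real) set"
  assumes "dominated_linear_graph F0" and "F0 \<noteq> {}"
  obtains \<phi> :: "'x \<Rightarrow>\<^sub>L real" where "\<And>x a. (x, a) \<in> F0 \<Longrightarrow> \<phi> x = a"
proof -
  obtain F where F: "dominated_linear_graph F" and "F0 \<subseteq> F" and total: "\<And>x. \<exists>a. (x, a) \<in> F"
    using dominated_linear_graph_total_extension[OF assms] by blast
  define f where "f x = (THE a. (x, a) \<in> F)" for x
  have graph: "(x, f x) \<in> F" for x
  proof -
    have "\<exists>!a. (x, a) \<in> F" using total dominated_linear_graph_unique[OF F] by blast
    then show ?thesis unfolding f_def by (rule theI')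
  qed
  have f_eq: "f x = a" if "(x, a) \<in> F" for x a
    using dominated_linear_graph_unique[OF F that graph] by simp
  have "bounded_linear f"
  proof (rule bounded_linear_intro)
    show "f (x + y) = f x + f y" for x y
      by (rule f_eq[OF dominated_linear_graph_add[OF F graph graph]])
    show "f (c *\<^sub>R x) = c *\<^sub>R f x" for c x
      using f_eq[OF dominated_linear_graph_scaleR[OF F graph]] by simp
    show "norm (f x) \<le> norm x * 1" for x
      using dominated_linear_graph_le_norm[OF F graph, of x]
        dominated_linear_graph_le_norm[OF F dominated_linear_graph_scaleR[OF F graph[of x], where c="-1"]]
      by simp
  qed
  then have "Blinfun f x = a" if "(x, a) \<in> F0" for x a
    using f_eq \<open>F0 \<subseteq> F\<close> that by (simp add: bounded_linear_Blinfun_apply subsetD)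
  then show ?thesis by (rule that)
qed

lemma scaleR_infdist_le_norm:
  assumes M: "subspace M" and "m \<in> M"
  shows "s * infdist x0 M \<le> norm (m + s *\<^sub>R x0)"
proof (cases "s = 0")
  case False
  then have "\<bar>s\<bar> > 0" by simp
  have "x0 - (- (1 / s)) *\<^sub>R m = (1 / s) *\<^sub>R (m + s *\<^sub>R x0)"
    using False by (simp add: scaleR_add_right add.commute)
  then have "infdist x0 M \<le> norm ((1 / s) *\<^sub>R (m + s *\<^sub>R x0))"
    using infdist_le[OF subspace_scale[OF M \<open>m \<in> M\<close>], of x0 "- (1 / s)"]
    unfolding dist_norm by simp
  then have "\<bar>s\<bar> * infdist x0 M \<le> norm (m + s *\<^sub>R x0)"
    using \<open>\<bar>s\<bar> > 0\<close> by (simp add: pos_le_divide_eq mult.commute)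
  moreover have "s * infdist x0 M \<le> \<bar>s\<bar> * infdist x0 M"
    using infdist_nonneg[of x0 M] by (simp add: mult_right_mono)
  ultimately show ?thesis by simp
qed simp

lemma dominated_linear_graph_infdist:
  fixes M :: "'x::real_normed_vector set"
  assumes M: "subspace M" and "x0 \<notin> M"
  shows "dominated_linear_graph {(m + s *\<^sub>R x0, s * infdist x0 M) | m s. m \<in> M}"
    (is "dominated_linear_graph ?F")
  unfolding dominated_linear_graph_def
proof (intro conjI allI impI)
  fix w p q assume "(w, p) \<in> ?F" "(w, q) \<in> ?F"
  then obtain m s m' s' where ms: "m \<in> M" "w = m + s *\<^sub>R x0" "p = s * infdist x0 M"
    and ms': "m' \<in> M" "w = m' + s' *\<^sub>R x0" "q = s' * infdist x0 M"
    by blast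
  have "s = s'"
  proof (rule ccontr)
    assume "s \<noteq> s'"
    have "(s - s') *\<^sub>R x0 = m' - m" using ms(2) ms'(2) by (simp add: algebra_simps)
    then have "(1 / (s - s')) *\<^sub>R ((s - s') *\<^sub>R x0) = (1 / (s - s')) *\<^sub>R (m' - m)" by simp
    then have "x0 = (1 / (s - s')) *\<^sub>R (m' - m)" using \<open>s \<noteq> s'\<close> by simp
    then have "x0 \<in> M" using M ms(1) ms'(1) by (simp add: subspace_scale subspace_diff)
    then show False using \<open>x0 \<notin> M\<close> by simp
  qed
  then show "p = q" using ms ms' by simp
next
  fix w p v q assume "(w, p) \<in> ?F" "(v, q) \<in> ?F"
  then obtain m s m' s' where "m \<in> M" "w = m + s *\<^sub>R x0" "p = s * infdist x0 M"
    and "m' \<in> M" "v = m' + s' *\<^sub>R x0" "q = s' * infdist x0 M"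
    by blast
  then show "(w + v, p + q) \<in> ?F"
    using subspace_add[OF M]
    by (intro CollectI exI[of _ "m + m'"] exI[of _ "s + s'"]) (simp add: algebra_simps)
next
  fix w p c assume "(w, p) \<in> ?F"
  then obtain m s where "m \<in> M" "w = m + s *\<^sub>R x0" "p = s * infdist x0 M" by blast
  then show "(c *\<^sub>R w, c * p) \<in> ?F"
    using subspace_scale[OF M]
    by (intro CollectI exI[of _ "c *\<^sub>R m"] exI[of _ "c * s"]) (simp add: algebra_simps)
next
  fix w p assume "(w, p) \<in> ?F"
  then obtain m s where "m \<in> M" "w = m + s *\<^sub>R x0" "p = s * infdist x0 M" by blast
  then show "p \<le> norm w" using scaleR_infdist_le_norm[OF M] by simp
qed

lemma separating_functional:
  fixes M :: "'x::real_normed_vector set"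
  assumes "closed M" and M: "subspace M" and "x0 \<notin> M"
  obtains \<phi> :: "'x \<Rightarrow>\<^sub>L real" where "\<phi> x0 \<noteq> 0" "\<And>m. m \<in> M \<Longrightarrow> \<phi> m = 0"
proof -
  define d where "d = infdist x0 M"
  have "M \<noteq> {}" using subspace_0[OF M] by blast
  then have "d \<noteq> 0"
    using in_closed_iff_infdist_zero[OF \<open>closed M\<close>] \<open>x0 \<notin> M\<close> unfolding d_def by blast
  define F0 where "F0 = {(m + s *\<^sub>R x0, s * d) | m s. m \<in> M}"
  have graph: "dominated_linear_graph F0"
    unfolding F0_def d_def by (rule dominated_linear_graph_infdist[OF M \<open>x0 \<notin> M\<close>])
  have "F0 \<noteq> {}" unfolding F0_def using subspace_0[OF M] by blast
  then obtain \<phi> :: "'x \<Rightarrow>\<^sub>L real" where \<phi>: "\<And>x a. (x, a) \<in> F0 \<Longrightarrow> \<phi> x = a"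
    by (rule hahn_banach_graph[OF graph]) (rule that)
  have "(x0, d) \<in> F0"
    unfolding F0_def using subspace_0[OF M] by (intro CollectI exI[of _ 0] exI[of _ 1]) simp
  moreover have "(m, 0) \<in> F0" if "m \<in> M" for m
    unfolding F0_def using that by (intro CollectI exI[of _ m] exI[of _ 0]) simp
  ultimately show ?thesis using \<phi> \<open>d \<noteq> 0\<close> by (intro that[of \<phi>]) auto
qed

lemma adjoint_injective_closed_subspace_UNIV:
  fixes K :: "'x::banach \<Rightarrow>\<^sub>L 'x"
  assumes inj: "adjoint_injective K" and "closed M" "subspace M"
    and range: "range (blinfun_apply K) \<subseteq> M"
  shows "M = UNIV"
proof (rule ccontr)
  assume "M \<noteq> UNIV"
  then obtain x0 where "x0 \<notin> M" by blast
  then obtain \<phi> :: "'x \<Rightarrow>\<^sub>L real" where "\<phi> x0 \<noteq> 0" and vanish: "\<And>m. m \<in> M \<Longrightarrow> \<phi> m = 0"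
    using separating_functional[OF \<open>closed M\<close> \<open>subspace M\<close>] by blast
  have "\<phi> o\<^sub>L K = 0"
    by (rule blinfun_eqI) (use range vanish in auto)
  then have "\<phi> = 0" using inj unfolding adjoint_injective_def by blast
  then show False using \<open>\<phi> x0 \<noteq> 0\<close> by simp
qed

lemma surj_imp_adjoint_injective:
  assumes "surj (blinfun_apply K)"
  shows "adjoint_injective K"
  unfolding adjoint_injective_def
proof (intro allI impI)
  fix \<phi> :: "_ \<Rightarrow>\<^sub>L real" assume "\<phi> o\<^sub>L K = 0"
  show "\<phi> = 0"
  proof (rule blinfun_eqI)
    fix x
    obtain z where "x = K z" using assms by (metis surjD)
    have "(\<phi> o\<^sub>L K) z = 0" using \<open>\<phi> o\<^sub>L K = 0\<close> by simp
    then show "\<phi> x = blinfun_apply 0 x" using \<open>x = K z\<close> by simp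
  qed
qed

lemma subspace_range_blinfun: "subspace (range (blinfun_apply L))"
  by (rule linear_subspace_image[OF bounded_linear.linear[OF blinfun.bounded_linear_right] subspace_UNIV])

section \<open>Extension to a group\<close>

lemma bounded_below_id_blinfun: "bounded_below id_blinfun"
  unfolding bounded_below_def by (intro exI[of _ 1]) simp

lemma c0_semigroup_invertible:
  fixes T :: "real \<Rightarrow> ('x::banach \<Rightarrow>\<^sub>L 'x)"
  assumes sg: "c0_semigroup T" and "s > 0"
    and "bounded_below (T s)" "surj (blinfun_apply (T s))" and "0 \<le> t"
  shows "bounded_below (T t) \<and> surj (blinfun_apply (T t))"
proof -
  have multiple: "bounded_below (T (real n * s)) \<and> surj (blinfun_apply (T (real n * s)))" for n
  proof (induction n)
    case 0
    then show ?case by (simp add: c0_semigroup_0[OF sg] bounded_below_id_blinfun)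
  next
    case (Suc n)
    have eq: "T (real (Suc n) * s) = T s o\<^sub>L T (real n * s)"
      using c0_semigroup_add[OF sg, of s "real n * s"] \<open>s > 0\<close> by (simp add: algebra_simps)
    have "surj (blinfun_apply (T s) \<circ> blinfun_apply (T (real n * s)))"
      using comp_surj[of "blinfun_apply (T (real n * s))" "blinfun_apply (T s)"] Suc.IH assms(4) by simp
    moreover have "bounded_below (T s o\<^sub>L T (real n * s))"
      using bounded_below_compose[OF assms(3)] Suc.IH by blast
    ultimately show ?case unfolding eq by (simp add: blinfun_compose.rep_eq)
  qed
  obtain n :: nat where "t / s \<le> real n" using real_arch_simple by blast
  then have "t \<le> real n * s" using \<open>s > 0\<close> by (simp add: field_simps)
  then have "T (real n * s) = T (real n * s - t) o\<^sub>L T t"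
    and factor: "T (real n * s) x = T t (T (real n * s - t) x)" for x
    using c0_semigroup_add[OF sg, of "real n * s - t" t] c0_semigroup_apply_add[OF sg, of t "real n * s - t"]
      \<open>0 \<le> t\<close> by simp_all
  then have "bounded_below (T t)"
    using multiple[of n] bounded_below_compose_right[of "T (real n * s - t)" "T t"] by simp
  moreover have "y \<in> range (blinfun_apply (T t))" for y
  proof -
    obtain z where "y = T (real n * s) z" using multiple[of n] by (metis surjD)
    then show ?thesis using factor by simp
  qed
  ultimately show ?thesis by blast
qed

lemma extends_to_group_if_inverses:
  fixes T R :: "real \<Rightarrow> ('x::banach \<Rightarrow>\<^sub>L 'x)"
  assumes sg: "c0_semigroup T"
    and TR: "\<And>t y. 0 \<le> t \<Longrightarrow> T t (R t y) = y" and RT: "\<And>t x. 0 \<le> t \<Longrightarrow> R t (T t x) = x"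
  shows "extends_to_group T"
proof -
  define S where "S t = (if 0 \<le> t then T t else R (- t))" for t
  have S_add_nonneg: "S (a + b) x = S a (S b x)" if "0 \<le> b" for a b x
  proof (cases "0 \<le> a")
    case True
    then show ?thesis using that by (simp add: S_def c0_semigroup_apply_add[OF sg])
  next
    case False
    show ?thesis
    proof (cases "0 \<le> a + b")
      case True
      have "T (- a) (T (a + b) x) = T b x"
        using c0_semigroup_apply_add[OF sg, of "- a" "a + b"] True False by simp
      then have "R (- a) (T b x) = T (a + b) x" using RT[of "- a" "T (a + b) x"] False by simp
      then show ?thesis using True False that by (simp add: S_def)
    next
      case False
      define z where "z = R (- (a + b)) x"
      have "T (- (a + b)) z = x" using TR False by (simp add: z_def)
      then have "T (- a) z = T b x"
        using c0_semigroup_apply_add[OF sg, of b "- (a + b)"] False that by simp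
      then have "R (- a) (T b x) = z" using RT[of "- a" z] \<open>\<not> 0 \<le> a\<close> by simp
      then show ?thesis using False \<open>\<not> 0 \<le> a\<close> that by (simp add: S_def z_def)
    qed
  qed
  have "S (a + b) x = S a (S b x)" for a b x
  proof (cases "0 \<le> b")
    case False
    have "S a (R (- b) x) = S (a + b) (T (- b) (R (- b) x))"
      using S_add_nonneg[of "- b" "a + b"] False by (simp add: S_def)
    then show ?thesis using TR[of "- b"] False by (simp add: S_def)
  qed (rule S_add_nonneg)
  then have "S (a + b) = S a o\<^sub>L S b" for a b by (intro blinfun_eqI) simp
  moreover have "S 0 = id_blinfun" "\<forall>t\<ge>0. S t = T t" by (simp_all add: S_def c0_semigroup_0[OF sg])
  ultimately show ?thesis unfolding extends_to_group_def by blast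
qed

lemma extends_to_group_if_invertible:
  fixes T :: "real \<Rightarrow> ('x::banach \<Rightarrow>\<^sub>L 'x)"
  assumes sg: "c0_semigroup T"
    and invertible: "\<And>t. 0 \<le> t \<Longrightarrow> bounded_below (T t) \<and> surj (blinfun_apply (T t))"
  shows "extends_to_group T"
proof -
  have "\<forall>t. \<exists>R :: 'x \<Rightarrow>\<^sub>L 'x. 0 \<le> t \<longrightarrow> (\<forall>y. T t (R y) = y) \<and> (\<forall>x. R (T t x) = x)"
  proof
    fix t :: real
    show "\<exists>R :: 'x \<Rightarrow>\<^sub>L 'x. 0 \<le> t \<longrightarrow> (\<forall>y. T t (R y) = y) \<and> (\<forall>x. R (T t x) = x)"
    proof (cases "0 \<le> t")
      case True
      then have "bounded_below (T t)" "surj (blinfun_apply (T t))" using invertible by simp_all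
      then show ?thesis using bounded_below_surj_inverse by blast
    qed simp
  qed
  then obtain R :: "real \<Rightarrow> ('x \<Rightarrow>\<^sub>L 'x)"
    where R: "\<And>t. 0 \<le> t \<Longrightarrow> (\<forall>y. T t (R t y) = y) \<and> (\<forall>x. R t (T t x) = x)"
    by metis
  have TR: "T t (R t y) = y" and RT: "R t (T t x) = x" if "0 \<le> t" for t x y
    using R[OF that] by simp_all
  show ?thesis by (rule extends_to_group_if_inverses[OF sg TR RT])
qed

lemma extends_to_group_surj:
  assumes "extends_to_group T" and "0 \<le> t"
  shows "surj (blinfun_apply (T t))"
proof -
  obtain S where S: "S 0 = id_blinfun" "\<And>a b. S (a + b) = S a o\<^sub>L S b" "\<And>t. 0 \<le> t \<Longrightarrow> S t = T t"
    using assms(1) unfolding extends_to_group_def by blast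
  have "S t o\<^sub>L S (- t) = id_blinfun" using S(2)[of t "- t"] S(1) by simp
  then have "(S t o\<^sub>L S (- t)) x = x" for x by simp
  then have "T t (S (- t) x) = x" for x using S(3)[OF \<open>0 \<le> t\<close>] by simp
  then show ?thesis by (rule surjI)
qed

lemma extends_to_group_if_adjoint_injective:
  fixes T :: "real \<Rightarrow> ('x::banach \<Rightarrow>\<^sub>L 'x)"
  assumes sg: "c0_semigroup T" and "\<eta> > 0" "bounded_below (T \<eta>)"
    and "t0 > 0" "adjoint_injective (T t0)"
  shows "extends_to_group T"
proof -
  define s where "s = min t0 \<eta>"
  have "0 < s" "s \<le> \<eta>" "s \<le> t0" using \<open>\<eta> > 0\<close> \<open>t0 > 0\<close> by (simp_all add: s_def)
  have "T \<eta> = T (\<eta> - s) o\<^sub>L T s" using c0_semigroup_add[OF sg, of "\<eta> - s" s] \<open>0 < s\<close> \<open>s \<le> \<eta>\<close> by simp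
  then have "bounded_below (T s)"
    using \<open>bounded_below (T \<eta>)\<close> bounded_below_compose_right[of "T (\<eta> - s)" "T s"] by simp
  have "T t0 x = T s (T (t0 - s) x)" for x
    using c0_semigroup_apply_add[OF sg, of s "t0 - s"] \<open>0 < s\<close> \<open>s \<le> t0\<close> by simp
  then have "range (blinfun_apply (T t0)) \<subseteq> range (blinfun_apply (T s))" by (metis image_subsetI rangeI)
  then have "surj (blinfun_apply (T s))"
    using adjoint_injective_closed_subspace_UNIV[OF \<open>adjoint_injective (T t0)\<close>
        closed_range_bounded_below[OF \<open>bounded_below (T s)\<close>] subspace_range_blinfun]
    by simp
  then have "bounded_below (T t) \<and> surj (blinfun_apply (T t))" if "0 \<le> t" for t
    using c0_semigroup_invertible[OF sg \<open>0 < s\<close> \<open>bounded_below (T s)\<close>] that by blast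
  then show ?thesis by (rule extends_to_group_if_invertible[OF sg])
qed

section \<open>Observation energy\<close>

lemma obs_energy_indicator:
  "obs_energy T C \<tau> x =
     (\<integral>\<^sup>+ t. ennreal ((norm (C (T (max t 0) x)))\<^sup>2) * indicator {t. 0 \<le> t \<and> ereal t < \<tau>} t \<partial>lborel)"
  unfolding obs_energy_def by (rule nn_integral_cong) (auto simp: indicator_def)

lemma obs_energy_mono: "\<tau>1 \<le> \<tau>2 \<Longrightarrow> obs_energy T C \<tau>1 x \<le> obs_energy T C \<tau>2 x"
  unfolding obs_energy_def
  by (rule nn_integral_mono) (auto simp: indicator_def intro: less_le_trans)

lemma M_sq_mono: "\<tau>1 \<le> \<tau>2 \<Longrightarrow> M_sq T C D \<tau>1 \<le> M_sq T C D \<tau>2"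
  unfolding M_sq_def by (rule SUP_mono) (auto intro: obs_energy_mono)

locale observation_system =
  fixes T :: "real \<Rightarrow> ('x::banach \<Rightarrow>\<^sub>L 'x)"
    and A :: "'x \<Rightarrow> 'x" and D :: "'x set"
    and C :: "'x \<Rightarrow> 'y::banach"
  assumes semigroup: "c0_semigroup T"
    and generator: "is_generator T D (\<lambda>x. - A x)"
    and C_add: "\<And>x y. x \<in> D \<Longrightarrow> y \<in> D \<Longrightarrow> C (x + y) = C x + C y"
    and C_scaleR: "\<And>c x. x \<in> D \<Longrightarrow> C (c *\<^sub>R x) = c *\<^sub>R C x"
    and C_graph_bounded: "\<exists>K. \<forall>x\<in>D. norm (C x) \<le> K * (norm x + norm (A x))"
begin

lemma domain_subspace: "subspace D"
  by (rule is_generator_subspace[OF generator])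

lemma domain_invariant: "x \<in> D \<Longrightarrow> 0 \<le> t \<Longrightarrow> T t x \<in> D"
  by (rule is_generator_semigroup_invariant(1)[OF semigroup generator])

lemma A_commute: "x \<in> D \<Longrightarrow> 0 \<le> t \<Longrightarrow> A (T t x) = T t (A x)"
  using is_generator_semigroup_invariant(2)[OF semigroup generator] by (simp add: blinfun.minus_right)

lemma A_diff:
  assumes "x \<in> D" "y \<in> D"
  shows "A (x - y) = A x - A y"
proof -
  have "- y \<in> D" using subspace_neg[OF domain_subspace \<open>y \<in> D\<close>] .
  then have "- A (x - y) = - A x - A (- y)"
    using is_generator_add(2)[OF generator \<open>x \<in> D\<close> \<open>- y \<in> D\<close>] by simp
  moreover have "- A (- y) = A y"
    using is_generator_scaleR(2)[OF generator \<open>y \<in> D\<close>, of "-1"] by simp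
  ultimately have "- A (x - y) = - (A x - A y)" by simp
  then show ?thesis by (simp only: neg_equal_iff_equal)
qed

lemma C_diff: "x \<in> D \<Longrightarrow> y \<in> D \<Longrightarrow> C (x - y) = C x - C y"
  using C_add[of "x - y" y] subspace_diff[OF domain_subspace] by (simp add: eq_diff_eq)

lemma C_zero: "C 0 = 0"
  using C_scaleR[OF subspace_0[OF domain_subspace], of 0] by simp

lemma continuous_on_observation:
  assumes "x \<in> D"
  shows "continuous_on {0..} (\<lambda>t. C (T t x))"
  unfolding continuous_on_def
proof
  fix t :: real assume "t \<in> {0..}"
  obtain K where K: "\<And>z. z \<in> D \<Longrightarrow> norm (C z) \<le> K * (norm z + norm (A z))"
    using C_graph_bounded by blast
  have bound: "norm (C (T s x) - C (T t x)) \<le> K * (norm (T s x - T t x) + norm (T s (A x) - T t (A x)))"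
    if "s \<in> {0..}" for s
  proof -
    have D: "T s x \<in> D" "T t x \<in> D"
      using domain_invariant \<open>x \<in> D\<close> that \<open>t \<in> {0..}\<close> by auto
    then have "norm (C (T s x - T t x)) \<le> K * (norm (T s x - T t x) + norm (A (T s x - T t x)))"
      by (intro K subspace_diff[OF domain_subspace])
    moreover have "A (T s x - T t x) = T s (A x) - T t (A x)"
      using D A_diff A_commute \<open>x \<in> D\<close> that \<open>t \<in> {0..}\<close> by simp
    ultimately show ?thesis using D by (simp add: C_diff)
  qed
  have "((\<lambda>s. T s y) \<longlongrightarrow> T t y) (at t within {0..})" for y
    using c0_semigroup_continuous_on[OF semigroup] \<open>t \<in> {0..}\<close> by (simp add: continuous_on_def)
  then have norm_lim: "((\<lambda>s. norm (T s y - T t y)) \<longlongrightarrow> 0) (at t within {0..})" for y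
    unfolding tendsto_norm_zero_iff LIM_zero_iff .
  have "((\<lambda>s. K * (norm (T s x - T t x) + norm (T s (A x) - T t (A x)))) \<longlongrightarrow> K * (0 + 0))
      (at t within {0..})"
    by (rule tendsto_mult_left, rule tendsto_add) (rule norm_lim)+
  then have "((\<lambda>s. K * (norm (T s x - T t x) + norm (T s (A x) - T t (A x)))) \<longlongrightarrow> 0)
      (at t within {0..})"
    by simp
  moreover have "\<forall>\<^sub>F s in at t within {0..}.
      norm (C (T s x) - C (T t x)) \<le> K * (norm (T s x - T t x) + norm (T s (A x) - T t (A x)))"
    using bound by (auto simp: eventually_at_filter)
  ultimately have "((\<lambda>s. C (T s x) - C (T t x)) \<longlongrightarrow> 0) (at t within {0..})"
    by (rule Lim_null_comparison[rotated])
  then show "((\<lambda>s. C (T s x)) \<longlongrightarrow> C (T t x)) (at t within {0..})"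
    by (simp add: LIM_zero_iff)
qed

lemma observation_measurable:
  assumes "x \<in> D"
  shows "(\<lambda>t. ennreal ((norm (C (T (max t 0) x)))\<^sup>2)) \<in> borel_measurable borel"
proof -
  have "continuous_on UNIV (\<lambda>t. C (T (max t 0) x))"
    by (rule continuous_on_compose2[OF continuous_on_observation[OF assms]])
       (auto intro!: continuous_intros)
  then have [measurable]: "(\<lambda>t. C (T (max t 0) x)) \<in> borel_measurable borel"
    by (rule borel_measurable_continuous_onI)
  show ?thesis by measurable
qed

lemma obs_energy_scaleR:
  assumes "x \<in> D"
  shows "obs_energy T C \<tau> (c *\<^sub>R x) = ennreal (c\<^sup>2) * obs_energy T C \<tau> x"
proof -
  define g where "g t = ennreal ((norm (C (T (max t 0) x)))\<^sup>2)" for t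
  have [measurable]: "g \<in> borel_measurable borel"
    unfolding g_def by (rule observation_measurable[OF assms])
  have "ennreal ((norm (C (T (max t 0) (c *\<^sub>R x))))\<^sup>2) = ennreal (c\<^sup>2) * g t" for t
    using C_scaleR domain_invariant[OF assms]
    by (simp add: g_def blinfun.scaleR_right power_mult_distrib ennreal_mult)
  then have "obs_energy T C \<tau> (c *\<^sub>R x) =
      (\<integral>\<^sup>+ t. ennreal (c\<^sup>2) * (g t * indicator {t. 0 \<le> t \<and> ereal t < \<tau>} t) \<partial>lborel)"
    unfolding obs_energy_indicator by (simp add: mult.assoc)
  also have "\<dots> = ennreal (c\<^sup>2) * obs_energy T C \<tau> x"
    unfolding obs_energy_indicator g_def[symmetric] by (rule nn_integral_cmult) measurable
  finally show ?thesis .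
qed

lemma obs_energy_split:
  assumes "x \<in> D" and "0 \<le> \<eta>" "ereal \<eta> \<le> \<tau>"
  shows "obs_energy T C \<tau> x = obs_energy T C (ereal \<eta>) x + obs_energy T C (\<tau> - ereal \<eta>) (T \<eta> x)"
proof -
  define g where "g t = ennreal ((norm (C (T (max t 0) x)))\<^sup>2)" for t
  have [measurable]: "g \<in> borel_measurable borel"
    unfolding g_def by (rule observation_measurable[OF assms(1)])
  define S1 where "S1 = {t. 0 \<le> t \<and> ereal t < ereal \<eta>}"
  define S2 where "S2 = {t. \<eta> \<le> t \<and> ereal t < \<tau>}"
  have [measurable]: "S1 \<in> sets borel" "S2 \<in> sets borel" unfolding S1_def S2_def by measurable
  have "indicator {t. 0 \<le> t \<and> ereal t < \<tau>} t = (indicator S1 t + indicator S2 t :: ennreal)" for t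
    using assms(2,3) less_le_trans[of "ereal t" "ereal \<eta>" \<tau>]
    by (cases "0 \<le> t"; cases "t < \<eta>") (auto simp: S1_def S2_def indicator_def)
  then have "obs_energy T C \<tau> x = (\<integral>\<^sup>+ t. g t * indicator S1 t + g t * indicator S2 t \<partial>lborel)"
    unfolding obs_energy_indicator g_def[symmetric] by (simp add: distrib_left)
  also have "\<dots> = (\<integral>\<^sup>+ t. g t * indicator S1 t \<partial>lborel) + (\<integral>\<^sup>+ t. g t * indicator S2 t \<partial>lborel)"
    by (rule nn_integral_add) measurable
  also have "(\<integral>\<^sup>+ t. g t * indicator S1 t \<partial>lborel) = obs_energy T C (ereal \<eta>) x"
    unfolding obs_energy_indicator g_def S1_def ..
  also have "(\<integral>\<^sup>+ t. g t * indicator S2 t \<partial>lborel) = (\<integral>\<^sup>+ s. g (\<eta> + s) * indicator S2 (\<eta> + s) \<partial>lborel)"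
    using nn_integral_real_affine[where f="\<lambda>t. g t * indicator S2 t" and c=1 and t=\<eta>] by simp
  also have "\<dots> = obs_energy T C (\<tau> - ereal \<eta>) (T \<eta> x)"
    unfolding obs_energy_indicator
  proof (rule nn_integral_cong)
    fix s :: real
    have "ereal (\<eta> + s) < \<tau> \<longleftrightarrow> ereal s < \<tau> - ereal \<eta>" by (cases \<tau>) auto
    moreover have "T (\<eta> + s) x = T s (T \<eta> x)" if "0 \<le> s"
      using c0_semigroup_apply_add[OF semigroup that \<open>0 \<le> \<eta>\<close>] by (simp add: add.commute)
    ultimately show "g (\<eta> + s) * indicator S2 (\<eta> + s) =
        ennreal ((norm (C (T (max s 0) (T \<eta> x))))\<^sup>2) * indicator {t. 0 \<le> t \<and> ereal t < \<tau> - ereal \<eta>} s"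
      using \<open>0 \<le> \<eta>\<close> by (cases "0 \<le> s") (auto simp: g_def S2_def indicator_def)
  qed
  finally show ?thesis .
qed

lemma obs_energy_normalize:
  assumes "x \<in> D" "x \<noteq> 0"
  obtains u where "u \<in> D" "norm u = 1" "obs_energy T C \<tau> x = ennreal ((norm x)\<^sup>2) * obs_energy T C \<tau> u"
proof
  let ?u = "(1 / norm x) *\<^sub>R x"
  show "?u \<in> D" using subspace_scale[OF domain_subspace \<open>x \<in> D\<close>] .
  show "norm ?u = 1" using \<open>x \<noteq> 0\<close> by simp
  show "obs_energy T C \<tau> x = ennreal ((norm x)\<^sup>2) * obs_energy T C \<tau> ?u"
    using obs_energy_scaleR[OF \<open>?u \<in> D\<close>, of \<tau> "norm x"] \<open>x \<noteq> 0\<close> by simp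
qed

lemma obs_energy_le_M_sq:
  assumes "x \<in> D"
  shows "obs_energy T C \<tau> x \<le> M_sq T C D \<tau> * ennreal ((norm x)\<^sup>2)"
proof (cases "x = 0")
  case True
  then show ?thesis by (simp add: obs_energy_def C_zero)
next
  case False
  then obtain u where "u \<in> D" "norm u = 1"
    and u: "obs_energy T C \<tau> x = ennreal ((norm x)\<^sup>2) * obs_energy T C \<tau> u"
    using obs_energy_normalize[OF assms] by metis
  then have "obs_energy T C \<tau> u \<le> M_sq T C D \<tau>" unfolding M_sq_def by (intro SUP_upper) auto
  then have "obs_energy T C \<tau> u * ennreal ((norm x)\<^sup>2) \<le> M_sq T C D \<tau> * ennreal ((norm x)\<^sup>2)"
    by (rule mult_right_mono) simp
  then show ?thesis unfolding u by (simp add: mult.commute)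
qed

lemma m_sq_le_obs_energy:
  assumes "x \<in> D"
  shows "m_sq T C D \<tau> * ennreal ((norm x)\<^sup>2) \<le> obs_energy T C \<tau> x"
proof (cases "x = 0")
  case False
  then obtain u where "u \<in> D" "norm u = 1"
    and u: "obs_energy T C \<tau> x = ennreal ((norm x)\<^sup>2) * obs_energy T C \<tau> u"
    using obs_energy_normalize[OF assms] by metis
  then have "m_sq T C D \<tau> \<le> obs_energy T C \<tau> u" unfolding m_sq_def by (intro INF_lower) auto
  then have "m_sq T C D \<tau> * ennreal ((norm x)\<^sup>2) \<le> obs_energy T C \<tau> u * ennreal ((norm x)\<^sup>2)"
    by (rule mult_right_mono) simp
  then show ?thesis unfolding u by (simp add: mult.commute)
qed simp

lemma obs_energy_gap_estimate:
  assumes "x \<in> D" and "0 \<le> \<eta>" "ereal \<eta> \<le> \<tau>"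
  shows "m_sq T C D \<tau> * ennreal ((norm x)\<^sup>2)
    \<le> M_sq T C D (ereal \<eta>) * ennreal ((norm x)\<^sup>2) + M_sq T C D \<tau> * ennreal ((norm (T \<eta> x))\<^sup>2)"
proof -
  have "m_sq T C D \<tau> * ennreal ((norm x)\<^sup>2) \<le> obs_energy T C \<tau> x"
    by (rule m_sq_le_obs_energy[OF assms(1)])
  also have "\<dots> = obs_energy T C (ereal \<eta>) x + obs_energy T C (\<tau> - ereal \<eta>) (T \<eta> x)"
    by (rule obs_energy_split[OF assms])
  also have "\<dots> \<le> M_sq T C D (ereal \<eta>) * ennreal ((norm x)\<^sup>2) + M_sq T C D \<tau> * ennreal ((norm (T \<eta> x))\<^sup>2)"
  proof (rule add_mono)
    show "obs_energy T C (ereal \<eta>) x \<le> M_sq T C D (ereal \<eta>) * ennreal ((norm x)\<^sup>2)"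
      by (rule obs_energy_le_M_sq[OF assms(1)])
    have "\<tau> - ereal \<eta> \<le> \<tau>" using \<open>0 \<le> \<eta>\<close> by (cases \<tau>) auto
    then have "M_sq T C D (\<tau> - ereal \<eta>) \<le> M_sq T C D \<tau>" by (rule M_sq_mono)
    have "obs_energy T C (\<tau> - ereal \<eta>) (T \<eta> x)
        \<le> M_sq T C D (\<tau> - ereal \<eta>) * ennreal ((norm (T \<eta> x))\<^sup>2)"
      by (rule obs_energy_le_M_sq[OF domain_invariant[OF assms(1,2)]])
    also have "\<dots> \<le> M_sq T C D \<tau> * ennreal ((norm (T \<eta> x))\<^sup>2)"
      by (rule mult_right_mono[OF \<open>M_sq T C D (\<tau> - ereal \<eta>) \<le> M_sq T C D \<tau>\<close>]) simp
    finally show "obs_energy T C (\<tau> - ereal \<eta>) (T \<eta> x) \<le> M_sq T C D \<tau> * ennreal ((norm (T \<eta> x))\<^sup>2)" .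
  qed
  finally show ?thesis .
qed

lemma observability_gap_coefficients:
  assumes "0 < \<eta>" "ereal \<eta> < \<tau>" and admissible: "M_sq T C D \<tau> < top"
    and gap: "M_sq T C D (ereal \<eta>) < m_sq T C D \<tau>"
  obtains a b K where "a < b" "0 \<le> K" "\<And>x. x \<in> D \<Longrightarrow> (b - a) * (norm x)\<^sup>2 \<le> K * (norm (T \<eta> x))\<^sup>2"
proof -
  obtain z where "M_sq T C D (ereal \<eta>) < z" "z < m_sq T C D \<tau>" using dense[OF gap] by blast
  have "z \<noteq> top" using \<open>z < m_sq T C D \<tau>\<close> by auto
  then obtain b where "0 \<le> b" "z = ennreal b" by (cases z rule: ennreal_cases) auto
  have "M_sq T C D (ereal \<eta>) \<noteq> top" using \<open>M_sq T C D (ereal \<eta>) < z\<close> by auto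
  then obtain a where "0 \<le> a" "M_sq T C D (ereal \<eta>) = ennreal a"
    by (cases "M_sq T C D (ereal \<eta>)" rule: ennreal_cases) auto
  have "a < b" using \<open>M_sq T C D (ereal \<eta>) < z\<close> \<open>z = ennreal b\<close> \<open>M_sq T C D (ereal \<eta>) = ennreal a\<close>
    \<open>0 \<le> a\<close> by (simp add: ennreal_less_iff)
  obtain K where "0 \<le> K" "M_sq T C D \<tau> = ennreal K"
    using admissible by (cases "M_sq T C D \<tau>" rule: ennreal_cases) auto
  have "(b - a) * (norm x)\<^sup>2 \<le> K * (norm (T \<eta> x))\<^sup>2" if "x \<in> D" for x
  proof -
    have "ennreal b \<le> m_sq T C D \<tau>" using \<open>z < m_sq T C D \<tau>\<close> \<open>z = ennreal b\<close> by simp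
    then have "ennreal b * ennreal ((norm x)\<^sup>2) \<le> m_sq T C D \<tau> * ennreal ((norm x)\<^sup>2)"
      by (rule mult_right_mono) simp
    also have "\<dots> \<le> ennreal a * ennreal ((norm x)\<^sup>2) + ennreal K * ennreal ((norm (T \<eta> x))\<^sup>2)"
      using obs_energy_gap_estimate[OF that less_imp_le[OF \<open>0 < \<eta>\<close>] less_imp_le[OF \<open>ereal \<eta> < \<tau>\<close>]]
        \<open>M_sq T C D (ereal \<eta>) = ennreal a\<close> \<open>M_sq T C D \<tau> = ennreal K\<close> by simp
    also have "\<dots> = ennreal (a * (norm x)\<^sup>2 + K * (norm (T \<eta> x))\<^sup>2)"
      using \<open>0 \<le> a\<close> \<open>0 \<le> K\<close> by (simp add: ennreal_mult ennreal_plus)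
    finally have "ennreal (b * (norm x)\<^sup>2) \<le> ennreal (a * (norm x)\<^sup>2 + K * (norm (T \<eta> x))\<^sup>2)"
      using \<open>0 \<le> b\<close> by (simp add: ennreal_mult)
    then have "b * (norm x)\<^sup>2 \<le> a * (norm x)\<^sup>2 + K * (norm (T \<eta> x))\<^sup>2"
      using \<open>0 \<le> a\<close> \<open>0 \<le> K\<close> by (subst (asm) ennreal_le_iff) auto
    then show ?thesis by (simp add: left_diff_distrib)
  qed
  then show ?thesis using \<open>a < b\<close> \<open>0 \<le> K\<close> that by blast
qed

lemma bounded_below_if_BFC:
  assumes "BFC_system T C D"
  shows "\<exists>\<eta>>0. bounded_below (T \<eta>)"
proof -
  obtain \<eta> \<tau> where "0 < \<eta>" "ereal \<eta> < \<tau>" "M_sq T C D \<tau> < top"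
    "M_sq T C D (ereal \<eta>) < m_sq T C D \<tau>"
    using assms unfolding BFC_system_def admissible_in_def by blast
  then obtain a b K where "a < b" "0 \<le> K"
    and estimate: "\<And>x. x \<in> D \<Longrightarrow> (b - a) * (norm x)\<^sup>2 \<le> K * (norm (T \<eta> x))\<^sup>2"
    by (rule observability_gap_coefficients) (rule that)
  define c where "c = sqrt ((b - a) / (K + 1))"
  have "c > 0" using \<open>a < b\<close> \<open>0 \<le> K\<close> by (simp add: c_def)
  moreover have "c * norm x \<le> norm (T \<eta> x)" if "x \<in> D" for x
  proof -
    have "(b - a) * (norm x)\<^sup>2 \<le> K * (norm (T \<eta> x))\<^sup>2" by (rule estimate[OF that])
    also have "\<dots> \<le> (K + 1) * (norm (T \<eta> x))\<^sup>2" by (simp add: distrib_right)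
    finally have "(b - a) * (norm x)\<^sup>2 \<le> (K + 1) * (norm (T \<eta> x))\<^sup>2" .
    then have "(b - a) / (K + 1) * (norm x)\<^sup>2 \<le> (norm (T \<eta> x))\<^sup>2"
      using \<open>0 \<le> K\<close> by (simp add: field_simps)
    then have "sqrt ((b - a) / (K + 1) * (norm x)\<^sup>2) \<le> sqrt ((norm (T \<eta> x))\<^sup>2)"
      by (rule real_sqrt_le_mono)
    then show ?thesis by (simp only: c_def real_sqrt_mult real_sqrt_abs abs_norm_cancel)
  qed
  ultimately have "bounded_below (T \<eta>)"
    using is_generator_dense_domain[OF semigroup generator] by (rule bounded_below_if_dense)
  then show ?thesis using \<open>0 < \<eta>\<close> by blast
qed

end

theorem lemma3p2:
  fixes T :: "real \<Rightarrow> ('x::banach \<Rightarrow>\<^sub>L 'x)"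
    and A :: "'x \<Rightarrow> 'x" and D :: "'x set"
    and C :: "'x \<Rightarrow> 'y::banach"
  assumes sg: "c0_semigroup T"
    and gen: "is_generator T D (\<lambda>x. - A x)"
    and C_add: "\<And>x y. x \<in> D \<Longrightarrow> y \<in> D \<Longrightarrow> C (x + y) = C x + C y"
    and C_scale: "\<And>c x. x \<in> D \<Longrightarrow> C (c *\<^sub>R x) = c *\<^sub>R C x"
    and C_bdd: "\<exists>K. \<forall>x\<in>D. norm (C x) \<le> K * (norm x + norm (A x))"
    and bfc: "BFC_system T C D"
  shows "((\<exists>t0>0. adjoint_injective (T t0)) \<longleftrightarrow> (\<forall>t>0. adjoint_injective (T t))) \<and>
         ((\<forall>t>0. adjoint_injective (T t)) \<longleftrightarrow> extends_to_group T)"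
proof -
  interpret observation_system T A D C
    by (rule observation_system.intro[OF sg gen C_add C_scale C_bdd])
  obtain \<eta> where "\<eta> > 0" "bounded_below (T \<eta>)" using bounded_below_if_BFC[OF bfc] by blast
  have group: "extends_to_group T" if "t0 > 0" "adjoint_injective (T t0)" for t0
    using extends_to_group_if_adjoint_injective[OF sg \<open>\<eta> > 0\<close> \<open>bounded_below (T \<eta>)\<close> that] .
  have adjoint: "adjoint_injective (T t)" if "extends_to_group T" "t > 0" for t
    using surj_imp_adjoint_injective[OF extends_to_group_surj[OF that(1)]] that(2) by simp
  show ?thesis
    using group adjoint zero_less_one by blast
qed

end
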